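(* Let $M=(S,\mathrm{Act},P)$ be an MDP, $T\subseteq S$, $\mathrm{rew}\colon S\to\mathbb{R}_{\ge0}$, $\mathrm{opt}\in\{\min,\max\}$, and let $x\in[0,\infty]^S$ be such that (1) $x\le E^{\mathrm{opt}}(x)$ (pointwise) and (2) for all $s\in S$, $\Pr^{\overline{\mathrm{opt}}}_s(\Diamond T)=1$ implies $x(s)<\infty$. Then $x(s)\le\mathbb{E}^{\mathrm{opt}}_s(\Diamond T)$ for all $s\in S$.
   Context: An MDP is a tuple $M=(S,\mathrm{Act},P)$ with $S$ finite, $\mathrm{Act}$ finite, $P\colon S\times\mathrm{Act}\times S\to[0,1]$ with $\sum_{s'}P(s,a,s')\in\{0,1\}$; $\mathrm{Act}(s)=\{a\mid\sum_{s'}P(s,a,s')=1\}$ is nonempty for all $s$; $\mathrm{Post}(s,a)=\{s'\mid P(s,a,s')>0\}$. A strategy is $\sigma\colon S\to\mathrm{Act}$ with $\sigma(s)\in\mathrm{Act}(s)$, inducing a Markov chain with transitions $P(s,\sigma(s),\cdot)$; $\Pr^\sigma_s(\Diamond T)$ is the probability of visiting $T$ from $s$, $\Pr^{\mathrm{opt}}_s(\Diamond T)=\mathrm{opt}_\sigma\Pr^\sigma_s(\Diamond T)$, and $\overline{\min}=\max,\overline{\max}=\min$. For an infinite path $s_0s_1\ldots$, the accumulated reward is $\sum_{k=0}^{n-1}\mathrm{rew}(s_k)$ where $n=\min\{i\mid s_i\in T\}$ if $T$ is visited, and $\infty$ if $T$ is never visited. $\mathbb{E}^\sigma_s(\Diamond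 T)$ is its expectation in the Markov chain induced by $\sigma$ started at $s$, and $\mathbb{E}^{\mathrm{opt}}_s(\Diamond T)=\mathrm{opt}_\sigma\mathbb{E}^\sigma_s(\Diamond T)$. The reward Bellman operator $E^{\mathrm{opt}}\colon[0,\infty]^S\to[0,\infty]^S$ is $E^{\mathrm{opt}}(x)(s)=0$ for $s\in T$ and $\mathrm{rew}(s)+\mathrm{opt}_{a\in\mathrm{Act}(s)}\sum_{s'\in\mathrm{Post}(s,a)}P(s,a,s')x(s')$ for $s\notin T$, with $p\cdot\infty=\infty$ for $p>0$ and $a+\infty=\infty$. *)

theory Defs
  imports Complex_Main "HOL-Library.Extended_Nonnegative_Real"
begin

definition is_mdp :: "('s::finite \<Rightarrow> 'a::finite \<Rightarrow> 's \<Rightarrow> real) \<Rightarrow> bool" where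
  "is_mdp P \<longleftrightarrow> (\<forall>s a s'. 0 \<le> P s a s' \<and> P s a s' \<le> 1)
     \<and> (\<forall>s a. (\<Sum>s'\<in>UNIV. P s a s') \<in> {0, 1})
     \<and> (\<forall>s. \<exists>a. (\<Sum>s'\<in>UNIV. P s a s') = 1)"

definition Act :: "('s::finite \<Rightarrow> 'a \<Rightarrow> 's \<Rightarrow> real) \<Rightarrow> 's \<Rightarrow> 'a set" where
  "Act P s = {a. (\<Sum>s'\<in>UNIV. P s a s') = 1}"

definition Post :: "('s \<Rightarrow> 'a \<Rightarrow> 's \<Rightarrow> real) \<Rightarrow> 's \<Rightarrow> 'a \<Rightarrow> 's set" where
  "Post P s a = {s'. P s a s' > 0}"

definition is_strategy :: "('s::finite \<Rightarrow> 'a \<Rightarrow> 's \<Rightarrow> real) \<Rightarrow> ('s \<Rightarrow> 'a) \<Rightarrow> bool" where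
  "is_strategy P \<sigma> \<longleftrightarrow> (\<forall>s. \<sigma> s \<in> Act P s)"

text \<open>Probability of the cylinder set of a finite path in the Markov chain induced by \<sigma>.\<close>
definition path_prob :: "('s \<Rightarrow> 'a \<Rightarrow> 's \<Rightarrow> real) \<Rightarrow> ('s \<Rightarrow> 'a) \<Rightarrow> 's list \<Rightarrow> ennreal" where
  "path_prob P \<sigma> xs = ennreal (\<Prod>k<length xs - 1. P (xs ! k) (\<sigma> (xs ! k)) (xs ! Suc k))"

definition first_hit_paths :: "'s set \<Rightarrow> 's \<Rightarrow> nat \<Rightarrow> 's list set" where
  "first_hit_paths T s n = {xs. length xs = Suc n \<and> xs ! 0 = s \<and> xs ! n \<in> T
                                \<and> (\<forall>k<n. xs ! k \<notin> T)}"

text \<open>Pr^\<sigma>_s(\<diamond>T): measure of the disjoint union of the first-hit cylinder sets.\<close>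
definition reach_prob :: "('s::finite \<Rightarrow> 'a \<Rightarrow> 's \<Rightarrow> real) \<Rightarrow> ('s \<Rightarrow> 'a) \<Rightarrow> 's set \<Rightarrow> 's \<Rightarrow> ennreal" where
  "reach_prob P \<sigma> T s = (\<Sum>n. \<Sum>xs\<in>first_hit_paths T s n. path_prob P \<sigma> xs)"

text \<open>On a path first visiting T at
  position n the reward is the sum of rew over positions < n (determined by the prefix);
  on paths never visiting T the reward is \<infinity>, contributing \<infinity> * Pr(never T)
  (which is 0 if that probability is 0).\<close>
definition exp_rew :: "('s::finite \<Rightarrow> 'a \<Rightarrow> 's \<Rightarrow> real) \<Rightarrow> ('s \<Rightarrow> 'a) \<Rightarrow> 's set \<Rightarrow> ('s \<Rightarrow> real)
    \<Rightarrow> 's \<Rightarrow> ennreal" where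
  "exp_rew P \<sigma> T rew s =
     (\<Sum>n. \<Sum>xs\<in>first_hit_paths T s n. path_prob P \<sigma> xs * ennreal (\<Sum>k<n. rew (xs ! k)))
     + top * (1 - reach_prob P \<sigma> T s)"

datatype opt = Min | Max

fun opt_of :: "opt \<Rightarrow> ennreal set \<Rightarrow> ennreal" where
  "opt_of Min A = Inf A"
| "opt_of Max A = Sup A"

fun dual :: "opt \<Rightarrow> opt" where
  "dual Min = Max"
| "dual Max = Min"

definition reach_prob_opt :: "opt \<Rightarrow> ('s::finite \<Rightarrow> 'a \<Rightarrow> 's \<Rightarrow> real) \<Rightarrow> 's set \<Rightarrow> 's \<Rightarrow> ennreal" where
  "reach_prob_opt opt P T s = opt_of opt {reach_prob P \<sigma> T s | \<sigma>. is_strategy P \<sigma>}"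

definition exp_rew_opt :: "opt \<Rightarrow> ('s::finite \<Rightarrow> 'a \<Rightarrow> 's \<Rightarrow> real) \<Rightarrow> 's set \<Rightarrow> ('s \<Rightarrow> real)
    \<Rightarrow> 's \<Rightarrow> ennreal" where
  "exp_rew_opt opt P T rew s = opt_of opt {exp_rew P \<sigma> T rew s | \<sigma>. is_strategy P \<sigma>}"

definition bellman :: "opt \<Rightarrow> ('s::finite \<Rightarrow> 'a \<Rightarrow> 's \<Rightarrow> real) \<Rightarrow> 's set \<Rightarrow> ('s \<Rightarrow> real)
    \<Rightarrow> ('s \<Rightarrow> ennreal) \<Rightarrow> 's \<Rightarrow> ennreal" where
  "bellman opt P T rew x s =
     (if s \<in> T then 0
      else ennreal (rew s) + opt_of opt ((\<lambda>a. \<Sum>s'\<in>Post P s a. ennreal (P s a s') * x s') ` Act P s))"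

end

theory Submission
  imports Defs
begin

text \<open>
  Choose a memoryless strategy \<sigma> with x \<le> E^\<sigma>(x), where E^\<sigma> is the Bellman operator of the
  Markov chain induced by \<sigma>: any strategy if opt = min, and one attaining the maximum in every
  state if opt = max. If \<sigma> misses T from s with positive probability, its expected reward is \<infinity>.
  Otherwise work on a set K of states that is closed under \<sigma>, from which \<sigma> reaches T almost
  surely and on which x is finite: the states with Pr^\<sigma>(\<diamond>T) = 1 if opt = min, and those with
  Pr^min(\<diamond>T) = 1 if opt = max. Unrolling x \<le> E^\<sigma>(x) N times on K bounds x(s) by the expected
  reward of \<sigma> plus the sum of x over K times the probability of not reaching T within N steps, which
  tends to 0.
\<close>

lemma ennreal_suminf_split_head: "(\<Sum>n. f n) = f 0 + (\<Sum>n. f (Suc n) :: ennreal)"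
  using suminf_offset[of f 1] by (simp add: summableI add.commute)

lemma ennreal_weighted_mean_eq_1:
  fixes p f :: "'b \<Rightarrow> ennreal"
  assumes "finite A" and "(\<Sum>w\<in>A. p w) = 1" and "\<forall>w\<in>A. f w \<le> 1"
    and "(\<Sum>w\<in>A. p w * f w) = 1" and "v \<in> A" and "p v \<noteq> 0"
  shows "f v = 1"
proof -
  have "(\<Sum>w\<in>A. p w * f w) + (\<Sum>w\<in>A. p w * (1 - f w)) = (\<Sum>w\<in>A. p w)"
    unfolding sum.distrib[symmetric] distrib_left[symmetric]
    using assms(3) by (simp add: add_diff_inverse_ennreal)
  then have "(\<Sum>w\<in>A. p w * (1 - f w)) = 0" using assms(2,4) by simp
  then have "p v * (1 - f v) = 0" using assms(1,5) by (simp add: sum_eq_0_iff)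
  then show "f v = 1" using assms(3,5,6) by (auto simp: diff_eq_0_iff_ennreal)
qed

lemma first_hit_paths_0: "first_hit_paths T u 0 = (if u \<in> T then {[u]} else {})"
  unfolding first_hit_paths_def by (auto simp: length_Suc_conv)

lemma first_hit_paths_Suc:
  "first_hit_paths T u (Suc n) = (if u \<in> T then {} else (#) u ` (\<Union>v. first_hit_paths T v n))"
proof (cases "u \<in> T")
  case True
  then show ?thesis unfolding first_hit_paths_def by auto
next
  case False
  have mem: "xs \<in> first_hit_paths T u (Suc n) \<longleftrightarrow> (\<exists>v ys. xs = u # ys \<and> ys \<in> first_hit_paths T v n)"
    for xs
  proof
    assume xs: "xs \<in> first_hit_paths T u (Suc n)"
    then obtain ys where "xs = u # ys" unfolding first_hit_paths_def by (cases xs) auto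
    with xs have "ys \<in> first_hit_paths T (ys ! 0) n"
      unfolding first_hit_paths_def
      by (auto simp del: nth_Cons_Suc simp add: nth_Cons_Suc[symmetric] dest: spec[of _ "Suc _"])
    with \<open>xs = u # ys\<close> show "\<exists>v ys. xs = u # ys \<and> ys \<in> first_hit_paths T v n" by blast
  next
    assume "\<exists>v ys. xs = u # ys \<and> ys \<in> first_hit_paths T v n"
    with False show "xs \<in> first_hit_paths T u (Suc n)"
      unfolding first_hit_paths_def by (auto simp: less_Suc_eq_0_disj)
  qed
  show ?thesis unfolding set_eq_iff mem using False by auto
qed

lemma first_hit_paths_nth_0: "ys \<in> first_hit_paths T v n \<Longrightarrow> ys ! 0 = v"
  and length_first_hit_paths: "ys \<in> first_hit_paths T v n \<Longrightarrow> length ys = Suc n"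
  unfolding first_hit_paths_def by simp_all

lemma finite_first_hit_paths: "finite (first_hit_paths T (u::'s::finite) n)"
proof (rule finite_subset)
  show "first_hit_paths T u n \<subseteq> {xs. set xs \<subseteq> (UNIV :: 's set) \<and> length xs = Suc n}"
    by (auto simp: length_first_hit_paths)
  show "finite {xs. set xs \<subseteq> (UNIV :: 's set) \<and> length xs = Suc n}"
    by (rule finite_lists_length_eq) simp
qed

lemma sum_first_hit_paths_Suc:
  assumes "u \<notin> T"
  shows "(\<Sum>xs\<in>first_hit_paths T (u::'s::finite) (Suc n). f xs)
       = (\<Sum>v\<in>UNIV. \<Sum>ys\<in>first_hit_paths T v n. f (u # ys))"
proof -
  have "(\<Sum>xs\<in>first_hit_paths T u (Suc n). f xs) = (\<Sum>ys\<in>(\<Union>v. first_hit_paths T v n). f (u # ys))"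
    using assms by (simp add: first_hit_paths_Suc sum.reindex)
  also have "\<dots> = (\<Sum>v\<in>UNIV. \<Sum>ys\<in>first_hit_paths T v n. f (u # ys))"
    by (rule sum.UNION_disjoint) (auto simp: finite_first_hit_paths dest: first_hit_paths_nth_0)
  finally show ?thesis .
qed

lemma path_prob_Cons:
  assumes "ys \<noteq> []" and "\<forall>s a s'. 0 \<le> P s a s'"
  shows "path_prob P \<sigma> (u # ys) = ennreal (P u (\<sigma> u) (ys ! 0)) * path_prob P \<sigma> ys"
proof -
  have "length (u # ys) - 1 = Suc (length ys - 1)" using assms(1) by simp
  then have "(\<Prod>k<length (u # ys) - 1. P ((u # ys) ! k) (\<sigma> ((u # ys) ! k)) ((u # ys) ! Suc k))
      = P u (\<sigma> u) (ys ! 0) * (\<Prod>k<length ys - 1. P (ys ! k) (\<sigma> (ys ! k)) (ys ! Suc k))"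
    by (simp only: prod.lessThan_Suc_shift nth_Cons_Suc nth_Cons_0)
  moreover have "0 \<le> (\<Prod>k<length ys - 1. P (ys ! k) (\<sigma> (ys ! k)) (ys ! Suc k))"
    using assms(2) by (simp add: prod_nonneg)
  ultimately show ?thesis
    unfolding path_prob_def using assms(2) by (simp only: ennreal_mult)
qed

section \<open>The Markov chain induced by a memoryless strategy\<close>

lemma P_nonneg: "is_mdp P \<Longrightarrow> 0 \<le> P s a s'"
  unfolding is_mdp_def by blast

lemma sum_ennreal_P_eq_1:
  fixes P :: "'s::finite \<Rightarrow> 'a::finite \<Rightarrow> 's \<Rightarrow> real"
  assumes "is_mdp P" and "a \<in> Act P s"
  shows "(\<Sum>v\<in>UNIV. ennreal (P s a v)) = 1"
  using assms by (simp add: Act_def P_nonneg sum_ennreal[symmetric])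

lemma sum_Post_eq_sum_UNIV:
  fixes P :: "'s::finite \<Rightarrow> 'a \<Rightarrow> 's \<Rightarrow> real"
  shows "(\<Sum>v\<in>Post P s a. ennreal (P s a v) * x v) = (\<Sum>v\<in>UNIV. ennreal (P s a v) * (x v :: ennreal))"
  by (rule sum.mono_neutral_left) (auto simp: Post_def ennreal_eq_0_iff)

lemma strategy_exists:
  assumes "is_mdp P"
  shows "\<exists>\<sigma>. is_strategy P \<sigma>"
proof -
  have "\<forall>s. \<exists>a. a \<in> Act P s" using assms unfolding is_mdp_def Act_def by blast
  then show ?thesis unfolding is_strategy_def by (rule choice)
qed

definition bellman_strategy :: "('s::finite \<Rightarrow> 'a \<Rightarrow> 's \<Rightarrow> real) \<Rightarrow> ('s \<Rightarrow> 'a) \<Rightarrow> 's set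
    \<Rightarrow> ('s \<Rightarrow> real) \<Rightarrow> ('s \<Rightarrow> ennreal) \<Rightarrow> 's \<Rightarrow> ennreal" where
  "bellman_strategy P \<sigma> T rew x s =
     (if s \<in> T then 0 else ennreal (rew s) + (\<Sum>v\<in>UNIV. ennreal (P s (\<sigma> s) v) * x v))"

locale strategy_chain =
  fixes P :: "'s::finite \<Rightarrow> 'a::finite \<Rightarrow> 's \<Rightarrow> real" and \<sigma> :: "'s \<Rightarrow> 'a" and T :: "'s set"
  assumes mdp: "is_mdp P" and strategy: "is_strategy P \<sigma>"
begin

abbreviation p :: "'s \<Rightarrow> 's \<Rightarrow> ennreal" where
  "p u v \<equiv> ennreal (P u (\<sigma> u) v)"

lemma sum_p: "(\<Sum>v\<in>UNIV. p u v) = 1"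
  using sum_ennreal_P_eq_1[OF mdp] strategy unfolding is_strategy_def by blast

lemma sum_p_mono:
  assumes "\<And>v. P u (\<sigma> u) v > 0 \<Longrightarrow> f v \<le> g v"
  shows "(\<Sum>v\<in>UNIV. p u v * f v) \<le> (\<Sum>v\<in>UNIV. p u v * g v)"
proof (rule sum_mono)
  fix v
  show "p u v * f v \<le> p u v * g v"
    using assms[of v] by (cases "P u (\<sigma> u) v > 0") (auto simp: mult_left_mono ennreal_neg not_less)
qed

fun hit_prob :: "nat \<Rightarrow> 's \<Rightarrow> ennreal" where
  "hit_prob 0 u = (if u \<in> T then 1 else 0)"
| "hit_prob (Suc n) u = (if u \<in> T then 0 else (\<Sum>v\<in>UNIV. p u v * hit_prob n v))"

lemma path_prob_Cons_first_hit:
  "ys \<in> first_hit_paths T v n \<Longrightarrow> path_prob P \<sigma> (u # ys) = p u v * path_prob P \<sigma> ys"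
proof -
  assume ys: "ys \<in> first_hit_paths T v n"
  then have "ys \<noteq> []" by (auto dest: length_first_hit_paths)
  then show ?thesis
    using path_prob_Cons[of ys P \<sigma> u] P_nonneg[OF mdp] first_hit_paths_nth_0[OF ys] by simp
qed

lemma sum_path_prob_first_hit_paths:
  "(\<Sum>xs\<in>first_hit_paths T u n. path_prob P \<sigma> xs) = hit_prob n u"
proof (induction n arbitrary: u)
  case 0
  show ?case by (simp add: first_hit_paths_0 path_prob_def)
next
  case (Suc n)
  show ?case
  proof (cases "u \<in> T")
    case True
    then show ?thesis by (simp add: first_hit_paths_Suc)
  next
    case False
    have "(\<Sum>xs\<in>first_hit_paths T u (Suc n). path_prob P \<sigma> xs)
        = (\<Sum>v\<in>UNIV. \<Sum>ys\<in>first_hit_paths T v n. path_prob P \<sigma> (u # ys))"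
      by (rule sum_first_hit_paths_Suc[OF False])
    also have "\<dots> = (\<Sum>v\<in>UNIV. \<Sum>ys\<in>first_hit_paths T v n. p u v * path_prob P \<sigma> ys)"
      by (intro sum.cong refl path_prob_Cons_first_hit)
    also have "\<dots> = (\<Sum>v\<in>UNIV. p u v * hit_prob n v)"
      by (simp only: sum_distrib_left[symmetric] Suc.IH)
    finally show ?thesis using False by simp
  qed
qed

definition reach :: "'s \<Rightarrow> ennreal" where
  "reach u = (\<Sum>n. hit_prob n u)"

lemma reach_prob_eq_reach: "reach_prob P \<sigma> T u = reach u"
  unfolding reach_prob_def reach_def by (simp add: sum_path_prob_first_hit_paths)

lemma reach_in_T: "u \<in> T \<Longrightarrow> reach u = 1"
  unfolding reach_def by (subst ennreal_suminf_split_head) simp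

lemma reach_step: "u \<notin> T \<Longrightarrow> reach u = (\<Sum>v\<in>UNIV. p u v * reach v)"
proof -
  assume "u \<notin> T"
  then have "reach u = (\<Sum>n. \<Sum>v\<in>UNIV. p u v * hit_prob n v)"
    unfolding reach_def by (subst ennreal_suminf_split_head) simp
  also have "\<dots> = (\<Sum>v\<in>UNIV. p u v * reach v)"
    unfolding reach_def by (simp add: suminf_sum ennreal_suminf_cmult)
  finally show ?thesis .
qed

lemma sum_hit_prob_Suc:
  "(\<Sum>n<Suc N. hit_prob n u) = (if u \<in> T then 1 else \<Sum>v\<in>UNIV. p u v * (\<Sum>n<N. hit_prob n v))"
proof (cases "u \<in> T")
  case False
  have "(\<Sum>n<Suc N. hit_prob n u) = hit_prob 0 u + (\<Sum>n<N. hit_prob (Suc n) u)"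
    by (rule sum.lessThan_Suc_shift)
  also have "\<dots> = (\<Sum>n<N. \<Sum>v\<in>UNIV. p u v * hit_prob n v)"
    using False by simp
  also have "\<dots> = (\<Sum>v\<in>UNIV. \<Sum>n<N. p u v * hit_prob n v)"
    by (rule sum.swap)
  finally show ?thesis
    using False by (simp only: sum_distrib_left if_False)
qed (simp add: sum.lessThan_Suc_shift del: sum.lessThan_Suc)

lemma reach_le_prefixpoint:
  assumes pre: "\<And>u. (if u \<in> T then 1 else \<Sum>v\<in>UNIV. p u v * h v) \<le> h u"
  shows "reach u \<le> h u"
proof -
  have "(\<Sum>n<N. hit_prob n u) \<le> h u" for N u
  proof (induction N arbitrary: u)
    case (Suc N)
    have "(\<Sum>n<Suc N. hit_prob n u)
        = (if u \<in> T then 1 else \<Sum>v\<in>UNIV. p u v * (\<Sum>n<N. hit_prob n v))"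
      by (rule sum_hit_prob_Suc)
    also have "\<dots> \<le> (if u \<in> T then 1 else \<Sum>v\<in>UNIV. p u v * h v)"
      by (simp add: Suc.IH sum_mono mult_left_mono)
    also have "\<dots> \<le> h u" by (rule pre)
    finally show ?case .
  qed simp
  then show ?thesis unfolding reach_def by (intro suminf_le_const summableI)
qed

lemma reach_le_1: "reach u \<le> 1"
  by (rule reach_le_prefixpoint) (simp add: sum_p)

lemma reach_eq_1_successor:
  assumes "u \<notin> T" and "reach u = 1" and "P u (\<sigma> u) v > 0"
  shows "reach v = 1"
proof (rule ennreal_weighted_mean_eq_1[where p="p u" and A=UNIV])
  show "(\<Sum>v\<in>UNIV. p u v * reach v) = 1"
    using reach_step[OF assms(1)] assms(2) by simp
qed (use assms(3) sum_p reach_le_1 in auto)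

fun no_hit_prob :: "nat \<Rightarrow> 's \<Rightarrow> ennreal" where
  "no_hit_prob 0 u = 1"
| "no_hit_prob (Suc N) u = (if u \<in> T then 0 else (\<Sum>v\<in>UNIV. p u v * no_hit_prob N v))"

lemma sum_hit_prob_plus_no_hit_prob: "(\<Sum>n<N. hit_prob n u) + no_hit_prob N u = 1"
proof (induction N arbitrary: u)
  case (Suc N)
  show ?case
  proof (cases "u \<in> T")
    case False
    then have "(\<Sum>n<Suc N. hit_prob n u) + no_hit_prob (Suc N) u
        = (\<Sum>v\<in>UNIV. p u v * (\<Sum>n<N. hit_prob n v)) + (\<Sum>v\<in>UNIV. p u v * no_hit_prob N v)"
      by (simp only: sum_hit_prob_Suc no_hit_prob.simps if_False)
    also have "\<dots> = (\<Sum>v\<in>UNIV. p u v * ((\<Sum>n<N. hit_prob n v) + no_hit_prob N v))"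
      by (simp only: distrib_left sum.distrib)
    finally show ?thesis by (simp add: Suc.IH sum_p)
  next
    case True
    then have "(\<Sum>n<Suc N. hit_prob n u) = 1"
      by (simp only: sum_hit_prob_Suc if_True)
    with True show ?thesis by simp
  qed
qed simp

lemma no_hit_prob_tendsto_0:
  assumes "reach u = 1"
  shows "(\<lambda>N. no_hit_prob N u) \<longlonglongrightarrow> 0"
proof -
  have "no_hit_prob N u = 1 - (\<Sum>n<N. hit_prob n u)" for N
  proof -
    have sum_1: "(\<Sum>n<N. hit_prob n u) + no_hit_prob N u = 1"
      by (rule sum_hit_prob_plus_no_hit_prob)
    then have "(\<Sum>n<N. hit_prob n u) \<noteq> top"
      by (intro notI) simp
    from ennreal_add_diff_cancel_left[OF this, of "no_hit_prob N u"] show ?thesis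
      by (simp add: sum_1)
  qed
  moreover have "(\<lambda>N. 1 - (\<Sum>n<N. hit_prob n u)) \<longlonglongrightarrow> 1 - reach u"
    using assms unfolding reach_def
    by (intro tendsto_diff_ennreal tendsto_const summable_LIMSEQ summableI) simp_all
  ultimately show ?thesis using assms by simp
qed

end

locale rewarded_chain = strategy_chain P \<sigma> T
  for P :: "'s::finite \<Rightarrow> 'a::finite \<Rightarrow> 's \<Rightarrow> real" and \<sigma> T +
  fixes rew :: "'s \<Rightarrow> real"
  assumes rew_nonneg: "0 \<le> rew u"
begin

fun hit_rew :: "nat \<Rightarrow> 's \<Rightarrow> ennreal" where
  "hit_rew 0 u = 0"
| "hit_rew (Suc n) u =
     (if u \<in> T then 0 else (\<Sum>v\<in>UNIV. p u v * (ennreal (rew u) * hit_prob n v + hit_rew n v)))"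

lemma sum_path_reward_first_hit_paths:
  "(\<Sum>xs\<in>first_hit_paths T u n. path_prob P \<sigma> xs * ennreal (\<Sum>k<n. rew (xs ! k))) = hit_rew n u"
proof (induction n arbitrary: u)
  case (Suc n)
  show ?case
  proof (cases "u \<in> T")
    case True
    then show ?thesis by (simp add: first_hit_paths_Suc)
  next
    case False
    have reward_Cons: "ennreal (\<Sum>k<Suc n. rew ((u # ys) ! k)) = ennreal (rew u) + ennreal (\<Sum>k<n. rew (ys ! k))"
      for ys
      by (simp add: sum.lessThan_Suc_shift ennreal_plus rew_nonneg sum_nonneg del: sum.lessThan_Suc)
    have "(\<Sum>xs\<in>first_hit_paths T u (Suc n). path_prob P \<sigma> xs * ennreal (\<Sum>k<Suc n. rew (xs ! k)))
        = (\<Sum>v\<in>UNIV. \<Sum>ys\<in>first_hit_paths T v n.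
             path_prob P \<sigma> (u # ys) * ennreal (\<Sum>k<Suc n. rew ((u # ys) ! k)))"
      by (rule sum_first_hit_paths_Suc[OF False])
    also have "\<dots> = (\<Sum>v\<in>UNIV. \<Sum>ys\<in>first_hit_paths T v n. p u v *
             (ennreal (rew u) * path_prob P \<sigma> ys + path_prob P \<sigma> ys * ennreal (\<Sum>k<n. rew (ys ! k))))"
    proof (intro sum.cong refl)
      fix v ys
      assume ys: "ys \<in> first_hit_paths T v n"
      have "path_prob P \<sigma> (u # ys) * ennreal (\<Sum>k<Suc n. rew ((u # ys) ! k))
          = p u v * path_prob P \<sigma> ys * (ennreal (rew u) + ennreal (\<Sum>k<n. rew (ys ! k)))"
        by (simp only: path_prob_Cons_first_hit[OF ys] reward_Cons)
      then show "path_prob P \<sigma> (u # ys) * ennreal (\<Sum>k<Suc n. rew ((u # ys) ! k))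
          = p u v * (ennreal (rew u) * path_prob P \<sigma> ys + path_prob P \<sigma> ys * ennreal (\<Sum>k<n. rew (ys ! k)))"
        by (simp add: algebra_simps)
    qed
    also have "\<dots> = (\<Sum>v\<in>UNIV. p u v * (ennreal (rew u) * hit_prob n v + hit_rew n v))"
      by (simp add: sum_distrib_left sum.distrib distrib_left
          Suc.IH[symmetric] sum_path_prob_first_hit_paths[symmetric])
    finally show ?thesis using False by simp
  qed
qed simp

definition reach_rew :: "'s \<Rightarrow> ennreal" where
  "reach_rew u = (\<Sum>n. hit_rew n u)"

lemma exp_rew_eq_reach_rew: "reach u = 1 \<Longrightarrow> exp_rew P \<sigma> T rew u = reach_rew u"
  unfolding exp_rew_def reach_rew_def reach_prob_eq_reach by (simp add: sum_path_reward_first_hit_paths)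

lemma reach_rew_step:
  assumes "u \<notin> T"
  shows "reach_rew u = ennreal (rew u) * reach u + (\<Sum>v\<in>UNIV. p u v * reach_rew v)"
proof -
  have "reach_rew u = (\<Sum>n. \<Sum>v\<in>UNIV. p u v * (ennreal (rew u) * hit_prob n v + hit_rew n v))"
    unfolding reach_rew_def using assms by (subst ennreal_suminf_split_head) simp
  also have "\<dots> = (\<Sum>v\<in>UNIV. p u v * (ennreal (rew u) * reach v + reach_rew v))"
    unfolding reach_def reach_rew_def
    by (simp add: suminf_sum ennreal_suminf_cmult suminf_add[OF summableI summableI, symmetric])
  also have "\<dots> = ennreal (rew u) * reach u + (\<Sum>v\<in>UNIV. p u v * reach_rew v)"
    using reach_step[OF assms] by (simp add: distrib_left sum.distrib sum_distrib_left mult.left_commute)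
  finally show ?thesis .
qed

lemma le_exp_rew_of_closed:
  assumes bellman: "\<And>u. u \<in> K \<Longrightarrow> x u \<le> bellman_strategy P \<sigma> T rew x u"
    and closed: "\<And>u v. u \<in> K \<Longrightarrow> u \<notin> T \<Longrightarrow> 0 < P u (\<sigma> u) v \<Longrightarrow> v \<in> K"
    and reach_1: "\<And>u. u \<in> K \<Longrightarrow> reach u = 1"
    and finite: "\<And>u. u \<in> K \<Longrightarrow> x u < \<infinity>"
    and "s \<in> K"
  shows "x s \<le> exp_rew P \<sigma> T rew s"
proof -
  define M where "M = (\<Sum>u\<in>K. x u)"
  have "M < top" using finite by (simp add: M_def)
  have x_le_M: "x u \<le> M" if "u \<in> K" for u
    using that by (auto simp: M_def intro: member_le_sum)
  have bound: "x u \<le> reach_rew u + M * no_hit_prob N u" if "u \<in> K" for N u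
    using that
  proof (induction N arbitrary: u)
    case 0
    then show ?case using x_le_M by (simp add: add_increasing)
  next
    case (Suc N)
    show ?case
    proof (cases "u \<in> T")
      case True
      then have "x u = 0" using bellman[OF Suc.prems] by (simp add: bellman_strategy_def)
      then show ?thesis by simp
    next
      case False
      have "x u \<le> ennreal (rew u) + (\<Sum>v\<in>UNIV. p u v * x v)"
        using bellman[OF Suc.prems] False by (simp add: bellman_strategy_def)
      also have "\<dots> \<le> ennreal (rew u) + (\<Sum>v\<in>UNIV. p u v * (reach_rew v + M * no_hit_prob N v))"
        using closed[OF Suc.prems False] by (intro add_left_mono sum_p_mono Suc.IH)
      also have "\<dots> = reach_rew u + M * no_hit_prob (Suc N) u"
        using False reach_1[OF Suc.prems]
        by (simp add: reach_rew_step distrib_left sum.distrib sum_distrib_left mult.left_commute)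
      finally show ?thesis .
    qed
  qed
  have "(\<lambda>N. reach_rew s + M * no_hit_prob N s) \<longlonglongrightarrow> reach_rew s + M * 0"
    using reach_1[OF \<open>s \<in> K\<close>] \<open>M < top\<close>
    by (intro tendsto_add tendsto_const ennreal_tendsto_cmult no_hit_prob_tendsto_0)
  then have "x s \<le> reach_rew s"
    using bound[OF \<open>s \<in> K\<close>] by (intro LIMSEQ_le_const) auto
  then show ?thesis using reach_1[OF \<open>s \<in> K\<close>] by (simp add: exp_rew_eq_reach_rew)
qed

end

section \<open>Optimal values\<close>

lemma reach_prob_le_1:
  assumes "is_mdp P" and "is_strategy P \<sigma>"
  shows "reach_prob P \<sigma> T u \<le> 1"
proof -
  interpret strategy_chain P \<sigma> T using assms by unfold_locales
  show ?thesis by (simp add: reach_prob_eq_reach reach_le_1)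
qed

lemma exp_rew_eq_top:
  assumes "is_mdp P" and "is_strategy P \<sigma>" and "reach_prob P \<sigma> T s \<noteq> 1"
  shows "exp_rew P \<sigma> T rew s = \<infinity>"
  using assms reach_prob_le_1[OF assms(1,2), of T s] unfolding exp_rew_def
  by (auto simp: diff_eq_0_iff_ennreal ennreal_top_mult)

lemma reach_prob_opt_Min_eq_1_iff:
  assumes "is_mdp P"
  shows "reach_prob_opt Min P T u = 1 \<longleftrightarrow> (\<forall>\<tau>. is_strategy P \<tau> \<longrightarrow> reach_prob P \<tau> T u = 1)"
proof -
  obtain \<sigma> where \<sigma>: "is_strategy P \<sigma>" using strategy_exists[OF assms] by blast
  note le_1 = reach_prob_le_1[OF assms]
  have "reach_prob_opt Min P T u \<le> 1"
    unfolding reach_prob_opt_def using \<sigma> le_1 by (auto intro: Inf_lower2)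
  then have "reach_prob_opt Min P T u = 1 \<longleftrightarrow> 1 \<le> reach_prob_opt Min P T u"
    by auto
  also have "\<dots> \<longleftrightarrow> (\<forall>\<tau>. is_strategy P \<tau> \<longrightarrow> 1 \<le> reach_prob P \<tau> T u)"
    unfolding reach_prob_opt_def by (auto simp: le_Inf_iff)
  also have "\<dots> \<longleftrightarrow> (\<forall>\<tau>. is_strategy P \<tau> \<longrightarrow> reach_prob P \<tau> T u = 1)"
    using le_1 by (auto intro: antisym)
  finally show ?thesis .
qed

lemma reach_prob_opt_Max_eq_1:
  assumes "is_mdp P" and "is_strategy P \<sigma>" and "reach_prob P \<sigma> T u = 1"
  shows "reach_prob_opt Max P T u = 1"
  unfolding reach_prob_opt_def using assms reach_prob_le_1[OF assms(1)]
  by (auto intro!: antisym Sup_least Sup_upper2)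

text \<open>Redirecting \<open>\<tau>\<close> at \<open>s\<close> to \<open>a\<close> cannot increase reachability probabilities: those of \<open>\<tau>\<close>
  form a pre-fixpoint of the Bellman operator of the redirected strategy, because \<open>\<tau>\<close> reaches
  \<open>T\<close> from \<open>s\<close> almost surely.\<close>

lemma reach_prob_eq_1_successor:
  assumes mdp: "is_mdp P" and "s \<notin> T" and a: "a \<in> Act P s" and "0 < P s a s'"
    and all_1: "\<And>\<tau>. is_strategy P \<tau> \<Longrightarrow> reach_prob P \<tau> T s = 1"
    and \<tau>: "is_strategy P \<tau>"
  shows "reach_prob P \<tau> T s' = 1"
proof -
  have \<tau>': "is_strategy P (\<tau>(s := a))" using \<tau> a by (simp add: is_strategy_def)
  interpret chain: strategy_chain P \<tau> T using mdp \<tau> by unfold_locales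
  interpret chain': strategy_chain P "\<tau>(s := a)" T using mdp \<tau>' by unfold_locales
  have "chain'.reach s' = 1"
    using chain'.reach_eq_1_successor[OF \<open>s \<notin> T\<close>] all_1[OF \<tau>'] \<open>0 < P s a s'\<close>
    by (simp add: chain'.reach_prob_eq_reach)
  moreover have "chain'.reach s' \<le> chain.reach s'"
  proof (rule chain'.reach_le_prefixpoint)
    fix u
    have "(\<Sum>v\<in>UNIV. ennreal (P s a v) * chain.reach v) \<le> (\<Sum>v\<in>UNIV. ennreal (P s a v))"
      using chain.reach_le_1 by (intro sum_mono) (simp add: mult_left_le)
    also have "\<dots> = chain.reach s"
      using sum_ennreal_P_eq_1[OF mdp a] all_1[OF \<tau>] by (simp add: chain.reach_prob_eq_reach)
    finally show "(if u \<in> T then 1 else \<Sum>v\<in>UNIV. ennreal (P u ((\<tau>(s := a)) u) v) * chain.reach v)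
        \<le> chain.reach u"
      by (cases "u = s") (auto simp: chain.reach_in_T chain.reach_step)
  qed
  ultimately show ?thesis
    using chain.reach_le_1[of s'] by (simp add: chain.reach_prob_eq_reach)
qed

lemma bellman_Min_le_bellman_strategy:
  assumes "is_strategy P \<sigma>"
  shows "bellman Min P T rew x u \<le> bellman_strategy P \<sigma> T rew x u"
  using assms unfolding bellman_def bellman_strategy_def sum_Post_eq_sum_UNIV is_strategy_def
  by (auto intro!: add_left_mono INF_lower)

lemma bellman_Max_attained:
  assumes "is_mdp P"
  shows "\<exists>\<sigma>. is_strategy P \<sigma> \<and> bellman Max P T rew x = bellman_strategy P \<sigma> T rew x"
proof -
  define g where "g u a = (\<Sum>v\<in>UNIV. ennreal (P u a v) * x v)" for u a
  have "\<exists>a. a \<in> Act P u \<and> g u a = Sup (g u ` Act P u)" for u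
  proof -
    have "Act P u \<noteq> {}" using assms unfolding is_mdp_def Act_def by blast
    then have "Lattices_Big.Max (g u ` Act P u) \<in> g u ` Act P u"
      and "Lattices_Big.Max (g u ` Act P u) = Sup (g u ` Act P u)"
      by (auto intro!: Max_in Max_Sup)
    then show ?thesis by force
  qed
  then obtain \<sigma> where "\<forall>u. \<sigma> u \<in> Act P u \<and> g u (\<sigma> u) = Sup (g u ` Act P u)"
    by metis
  then show ?thesis
    unfolding bellman_def bellman_strategy_def sum_Post_eq_sum_UNIV is_strategy_def g_def
    by (auto simp: fun_eq_iff)
qed

lemma le_exp_rew_opt_Min:
  assumes mdp: "is_mdp P" and "\<forall>s. 0 \<le> rew s"
    and sub: "\<forall>s. x s \<le> bellman Min P T rew x s"
    and finite: "\<forall>s. reach_prob_opt Max P T s = 1 \<longrightarrow> x s < \<infinity>"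
  shows "x s \<le> exp_rew_opt Min P T rew s"
proof -
  have "x s \<le> exp_rew P \<sigma> T rew s" if \<sigma>: "is_strategy P \<sigma>" for \<sigma>
  proof (cases "reach_prob P \<sigma> T s = 1")
    case True
    interpret rewarded_chain P \<sigma> T rew using assms \<sigma> by unfold_locales auto
    show ?thesis
    proof (rule le_exp_rew_of_closed[where K="{u. reach u = 1}"])
      show "x u \<le> bellman_strategy P \<sigma> T rew x u" for u
        using sub bellman_Min_le_bellman_strategy[OF \<sigma>] order_trans by blast
      show "x u < \<infinity>" if "u \<in> {u. reach u = 1}" for u
        using that finite reach_prob_opt_Max_eq_1[OF mdp \<sigma>] by (simp add: reach_prob_eq_reach)
    qed (use True reach_eq_1_successor in \<open>auto simp: reach_prob_eq_reach\<close>)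
  qed (simp add: exp_rew_eq_top[OF mdp \<sigma>])
  then show ?thesis unfolding exp_rew_opt_def by (auto intro: Inf_greatest)
qed

lemma le_exp_rew_opt_Max:
  assumes mdp: "is_mdp P" and "\<forall>s. 0 \<le> rew s"
    and sub: "\<forall>s. x s \<le> bellman Max P T rew x s"
    and finite: "\<forall>s. reach_prob_opt Min P T s = 1 \<longrightarrow> x s < \<infinity>"
  shows "x s \<le> exp_rew_opt Max P T rew s"
proof -
  have "\<exists>\<sigma>. is_strategy P \<sigma> \<and> x s \<le> exp_rew P \<sigma> T rew s"
  proof (cases "reach_prob_opt Min P T s = 1")
    case True
    obtain \<sigma> where \<sigma>: "is_strategy P \<sigma>"
      and bellman_\<sigma>: "bellman Max P T rew x = bellman_strategy P \<sigma> T rew x"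
      using bellman_Max_attained[OF mdp] by blast
    interpret rewarded_chain P \<sigma> T rew using assms \<sigma> by unfold_locales auto
    note Min_1 = reach_prob_opt_Min_eq_1_iff[OF mdp]
    have "x s \<le> exp_rew P \<sigma> T rew s"
    proof (rule le_exp_rew_of_closed[where K="{u. reach_prob_opt Min P T u = 1}"])
      show "v \<in> {u. reach_prob_opt Min P T u = 1}"
        if "u \<in> {u. reach_prob_opt Min P T u = 1}" "u \<notin> T" "0 < P u (\<sigma> u) v" for u v
        using that \<sigma> reach_prob_eq_1_successor[OF mdp] unfolding Min_1 is_strategy_def by blast
      show "reach u = 1" if "u \<in> {u. reach_prob_opt Min P T u = 1}" for u
        using that \<sigma> unfolding Min_1 reach_prob_eq_reach[symmetric] by blast
    qed (use sub bellman_\<sigma> finite True in auto)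
    with \<sigma> show ?thesis by blast
  next
    case False
    then obtain \<tau> where "is_strategy P \<tau>" and "reach_prob P \<tau> T s \<noteq> 1"
      unfolding reach_prob_opt_Min_eq_1_iff[OF mdp] by blast
    with exp_rew_eq_top[OF mdp] show ?thesis by fastforce
  qed
  then show ?thesis unfolding exp_rew_opt_def by (auto intro: Sup_upper2)
qed

theorem lemma6:
  fixes P :: "'s::finite \<Rightarrow> 'a::finite \<Rightarrow> 's \<Rightarrow> real"
    and T :: "'s set" and rew :: "'s \<Rightarrow> real" and opt :: opt and x :: "'s \<Rightarrow> ennreal"
  assumes "is_mdp P"
    and "\<forall>s. 0 \<le> rew s"
    and "\<forall>s. x s \<le> bellman opt P T rew x s"
    and "\<forall>s. reach_prob_opt (dual opt) P T s = 1 \<longrightarrow> x s < \<infinity>"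
  shows "\<forall>s. x s \<le> exp_rew_opt opt P T rew s"
  using assms le_exp_rew_opt_Min[of P rew x T] le_exp_rew_opt_Max[of P rew x T]
  by (cases opt) auto

end
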